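(* Let $N\ge1$, let real channel gains $a_{s,r},a_{s,j},a_{r,j}$ ($j=1,\dots,N$) be fixed, and for $\mathbf{P}=(P_s,P_r)\in[0,\infty)^2$ set $\mathsf{SNR}_{s,r}=a_{s,r}^2P_s$, $\mathsf{SNR}_{s,j}=a_{s,j}^2P_s$, $\mathsf{SNR}_{r,j}=a_{r,j}^2P_r$, and $\mathbf{S}(\mathbf{P})=(\mathsf{SNR}_{s,r},\mathsf{SNR}_{s,1},\dots,\mathsf{SNR}_{s,N},\mathsf{SNR}_{r,1},\dots,\mathsf{SNR}_{r,N})$. With $\mathsf{C}(x)=\tfrac12\log(1+x)$, $f_j(\rho,\mathbf{S})=\mathsf{SNR}_{s,j}+\mathsf{SNR}_{r,j}+2\rho\sqrt{\mathsf{SNR}_{s,j}\mathsf{SNR}_{r,j}}$, $g^*_j(\rho,\mathbf{S})=(1-\rho^2)\mathsf{SNR}_{s,r}$ and $R_{DF}(\rho,\mathbf{S})=\min_{1\le j\le N}\min(\mathsf{C}(f_j(\rho,\mathbf{S})),\mathsf{C}(g^*_j(\rho,\mathbf{S})))$, the map $(t,\mathbf{P})\mapsto R_{DF}(\sqrt t,\mathbf{S}(\mathbf{P}))$ is quasi-concave on $[0,1]\times[0,\infty)^2$ (i.e., quasi-concave in $(\rho^2,\mathbf{P})$).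
   Context: Setting: real AWGN multicast relay channel with source $s$, relay $r$ and destinations $1,\dots,N$; $\rho\in[0,1]$ is the source–relay input correlation coefficient. A function $F$ on a convex set is quasi-concave if $F(\lambda x_1+(1-\lambda)x_2)\ge\min(F(x_1),F(x_2))$ for all $x_1,x_2$ and $\lambda\in[0,1]$. *)

theory Defs
  imports "HOL-Analysis.Analysis"
begin

definition quasi_concave_on :: "'a::real_vector set \<Rightarrow> ('a \<Rightarrow> real) \<Rightarrow> bool" where
  "quasi_concave_on S F \<longleftrightarrow>
     (\<forall>x1\<in>S. \<forall>x2\<in>S. \<forall>u::real. 0 \<le> u \<and> u \<le> 1 \<longrightarrow>
        F (u *\<^sub>R x1 + (1 - u) *\<^sub>R x2) \<ge> min (F x1) (F x2))"

definition Ccap :: "real \<Rightarrow> real" where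
  "Ccap x = (1/2) * log 2 (1 + x)"

text \<open>The SNR vector S is represented by its components:
  snr_sr, snr_sd j (= SNR_{s,j}), snr_rd j (= SNR_{r,j}).\<close>
definition f_j :: "real \<Rightarrow> real \<Rightarrow> real \<Rightarrow> real" where
  "f_j \<rho> snr_sj snr_rj = snr_sj + snr_rj + 2 * \<rho> * sqrt (snr_sj * snr_rj)"

definition g_star :: "real \<Rightarrow> real \<Rightarrow> real" where
  "g_star \<rho> snr_sr = (1 - \<rho>^2) * snr_sr"

definition R_DF :: "nat \<Rightarrow> real \<Rightarrow> real \<Rightarrow> (nat \<Rightarrow> real) \<Rightarrow> (nat \<Rightarrow> real) \<Rightarrow> real" where
  "R_DF N \<rho> snr_sr snr_sd snr_rd =
     Min ((\<lambda>j. min (Ccap (f_j \<rho> (snr_sd j) (snr_rd j))) (Ccap (g_star \<rho> snr_sr))) ` {1..N})"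

definition R_DF_P :: "nat \<Rightarrow> real \<Rightarrow> (nat \<Rightarrow> real) \<Rightarrow> (nat \<Rightarrow> real) \<Rightarrow> real \<times> real \<times> real \<Rightarrow> real" where
  "R_DF_P N a_sr a_sd a_rd = (\<lambda>(t, Ps, Pr).
     R_DF N (sqrt t) (a_sr^2 * Ps) (\<lambda>j. (a_sd j)^2 * Ps) (\<lambda>j. (a_rd j)^2 * Pr))"

end

theory Submission
  imports Defs
begin

text \<open>Quasi-concavity is preserved by pointwise minima, by monotone post-composition and by
  linear pre-composition, so it suffices to treat the building blocks
  \<open>(t, x, y) \<mapsto> x + y + 2 \<surd>(t x y)\<close> and \<open>(t, z) \<mapsto> (1 - t) z\<close> on the nonnegative orthant.
  Take two points and a convex combination of them. If two of the coordinates are ordered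
  oppositely at the two points, the product of their convex combinations dominates the convex
  combination of their products; together with a weighted Cauchy--Schwarz inequality for the
  square root, the value at the combination is then at least the convex combination of the
  values. Otherwise all coordinates are ordered alike, so one of the two points lies
  componentwise below the combination, and monotonicity concludes.\<close>

lemma quasi_concave_on_min:
  assumes "quasi_concave_on S F" "quasi_concave_on S G"
  shows "quasi_concave_on S (\<lambda>x. min (F x) (G x))"
  using assms unfolding quasi_concave_on_def by (smt (verit, best))

lemma quasi_concave_on_Min:
  assumes "finite I" "I \<noteq> {}" "\<And>i. i \<in> I \<Longrightarrow> quasi_concave_on S (F i)"
  shows "quasi_concave_on S (\<lambda>x. Min ((\<lambda>i. F i x) ` I))"
  using assms
proof (induction I rule: finite_ne_induct)
  case (singleton i)
  then show ?case by simp
next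
  case (insert i I)
  then show ?case
    by (simp add: quasi_concave_on_min)
qed

lemma quasi_concave_on_mono_comp:
  assumes "quasi_concave_on S F" "convex S" "F ` S \<subseteq> T" "mono_on T h"
  shows "quasi_concave_on S (\<lambda>x. h (F x))"
  unfolding quasi_concave_on_def
proof (intro ballI allI impI)
  fix x1 x2 and u :: real
  assume x: "x1 \<in> S" "x2 \<in> S" and u: "0 \<le> u \<and> u \<le> 1"
  then have "u *\<^sub>R x1 + (1 - u) *\<^sub>R x2 \<in> S"
    using \<open>convex S\<close> by (simp add: convex_def)
  then have "h (min (F x1) (F x2)) \<le> h (F (u *\<^sub>R x1 + (1 - u) *\<^sub>R x2))"
    using assms x u unfolding quasi_concave_on_def
    by (intro mono_onD[OF \<open>mono_on T h\<close>]) (auto simp: min_def)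
  then show "min (h (F x1)) (h (F x2)) \<le> h (F (u *\<^sub>R x1 + (1 - u) *\<^sub>R x2))"
    by (simp add: min_def split: if_splits)
qed

lemma quasi_concave_on_linear_comp:
  assumes "quasi_concave_on T F" "linear L" "L ` S \<subseteq> T"
  shows "quasi_concave_on S (\<lambda>x. F (L x))"
  using assms unfolding quasi_concave_on_def
  by (simp add: image_subset_iff linear_add linear_scale)

lemma mono_on_Ccap: "mono_on {0..} Ccap"
  by (rule mono_onI) (simp add: Ccap_def)

lemma min_le_convex_comb:
  fixes a b u :: real
  assumes "0 \<le> u" "u \<le> 1"
  shows "min a b \<le> u * a + (1 - u) * b"
proof -
  have "u * min a b + (1 - u) * min a b \<le> u * a + (1 - u) * b"
    using assms by (intro add_mono mult_left_mono) auto
  then show ?thesis by (simp add: algebra_simps)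
qed

lemma convex_comb_mult_le_mult_convex_comb:
  fixes a1 a2 b1 b2 u :: real
  assumes "(a1 - a2) * (b1 - b2) \<le> 0" "0 \<le> u" "u \<le> 1"
  shows "u * (a1 * b1) + (1 - u) * (a2 * b2) \<le> (u * a1 + (1 - u) * a2) * (u * b1 + (1 - u) * b2)"
proof -
  have "(u * a1 + (1 - u) * a2) * (u * b1 + (1 - u) * b2) - (u * (a1 * b1) + (1 - u) * (a2 * b2))
      = u * (1 - u) * - ((a1 - a2) * (b1 - b2))"
    by (simp add: algebra_simps)
  moreover have "0 \<le> u * (1 - u) * - ((a1 - a2) * (b1 - b2))"
    using assms by (intro mult_nonneg_nonneg) auto
  ultimately show ?thesis by linarith
qed

lemma convex_comb_sqrt_mult_le:
  fixes p1 p2 q1 q2 u :: real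
  assumes "0 \<le> p1" "0 \<le> p2" "0 \<le> q1" "0 \<le> q2" "0 \<le> u" "u \<le> 1"
  shows "u * sqrt (p1 * q1) + (1 - u) * sqrt (p2 * q2)
    \<le> sqrt ((u * p1 + (1 - u) * p2) * (u * q1 + (1 - u) * q2))"
proof (rule real_le_rsqrt)
  define A1 A2 B1 B2 where "A1 = sqrt p1" "A2 = sqrt p2" "B1 = sqrt q1" "B2 = sqrt q2"
  have squares: "p1 = A1\<^sup>2" "p2 = A2\<^sup>2" "q1 = B1\<^sup>2" "q2 = B2\<^sup>2"
    using assms by (simp_all add: A1_A2_B1_B2_def)
  have "(u * p1 + (1 - u) * p2) * (u * q1 + (1 - u) * q2) - (u * (A1 * B1) + (1 - u) * (A2 * B2))\<^sup>2
      = u * (1 - u) * (A1 * B2 - A2 * B1)\<^sup>2"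
    unfolding squares by (simp add: algebra_simps power2_eq_square)
  moreover have "0 \<le> u * (1 - u) * (A1 * B2 - A2 * B1)\<^sup>2"
    using assms by simp
  moreover have "sqrt (p1 * q1) = A1 * B1" "sqrt (p2 * q2) = A2 * B2"
    by (simp_all add: A1_A2_B1_B2_def real_sqrt_mult)
  ultimately show "(u * sqrt (p1 * q1) + (1 - u) * sqrt (p2 * q2))\<^sup>2
      \<le> (u * p1 + (1 - u) * p2) * (u * q1 + (1 - u) * q2)"
    by (metis diff_ge_0_iff_ge)
qed

lemma convex_comb_sqrt_mult3_le:
  fixes t1 t2 x1 x2 y1 y2 u :: real
  assumes "0 \<le> t1" "0 \<le> t2" "0 \<le> x1" "0 \<le> x2" "0 \<le> y1" "0 \<le> y2" "0 \<le> u" "u \<le> 1"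
    and "(x1 - x2) * (y1 - y2) \<le> 0"
  shows "u * sqrt (t1 * x1 * y1) + (1 - u) * sqrt (t2 * x2 * y2)
    \<le> sqrt ((u * t1 + (1 - u) * t2) * (u * x1 + (1 - u) * x2) * (u * y1 + (1 - u) * y2))"
proof -
  have "u * sqrt (t1 * (x1 * y1)) + (1 - u) * sqrt (t2 * (x2 * y2))
      \<le> sqrt ((u * t1 + (1 - u) * t2) * (u * (x1 * y1) + (1 - u) * (x2 * y2)))"
    using assms by (intro convex_comb_sqrt_mult_le) auto
  also have "\<dots> \<le> sqrt ((u * t1 + (1 - u) * t2) * ((u * x1 + (1 - u) * x2) * (u * y1 + (1 - u) * y2)))"
    using assms convex_comb_mult_le_mult_convex_comb[of x1 x2 y1 y2 u]
    by (intro real_sqrt_le_mono mult_left_mono) auto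
  finally show ?thesis by (simp add: mult.assoc)
qed

lemma f_j_sqrt_eq:
  assumes "0 \<le> t" "0 \<le> x" "0 \<le> y"
  shows "f_j (sqrt t) x y = x + y + 2 * sqrt (t * x * y)"
  using assms by (simp add: f_j_def real_sqrt_mult mult.assoc)

lemma f_j_sqrt_mono:
  assumes "0 \<le> t" "0 \<le> x" "0 \<le> y" "t \<le> t'" "x \<le> x'" "y \<le> y'"
  shows "f_j (sqrt t) x y \<le> f_j (sqrt t') x' y'"
proof -
  have "sqrt (t * x * y) \<le> sqrt (t' * x' * y')"
    using assms by (intro real_sqrt_le_mono mult_mono) auto
  moreover have "0 \<le> t'" "0 \<le> x'" "0 \<le> y'"
    using assms by linarith+
  ultimately show ?thesis
    using assms f_j_sqrt_eq[of t x y] f_j_sqrt_eq[of t' x' y'] by linarith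
qed

lemma min_f_j_sqrt_le_convex_comb:
  fixes t1 t2 x1 x2 y1 y2 u :: real
  assumes nonneg: "0 \<le> t1" "0 \<le> t2" "0 \<le> x1" "0 \<le> x2" "0 \<le> y1" "0 \<le> y2"
    and u: "0 \<le> u" "u \<le> 1"
  shows "min (f_j (sqrt t1) x1 y1) (f_j (sqrt t2) x2 y2)
    \<le> f_j (sqrt (u * t1 + (1 - u) * t2)) (u * x1 + (1 - u) * x2) (u * y1 + (1 - u) * y2)"
    (is "min ?f1 ?f2 \<le> f_j (sqrt ?t) ?x ?y")
proof (cases "(x1 - x2) * (y1 - y2) \<le> 0 \<or> (t1 - t2) * (y1 - y2) \<le> 0 \<or> (t1 - t2) * (x1 - x2) \<le> 0")
  case True
  have "u * sqrt (t1 * x1 * y1) + (1 - u) * sqrt (t2 * x2 * y2) \<le> sqrt (?t * ?x * ?y)"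
    using True
  proof (elim disjE)
    assume "(x1 - x2) * (y1 - y2) \<le> 0"
    then show ?thesis
      using assms by (intro convex_comb_sqrt_mult3_le) auto
  next
    assume "(t1 - t2) * (y1 - y2) \<le> 0"
    then have "u * sqrt (x1 * t1 * y1) + (1 - u) * sqrt (x2 * t2 * y2) \<le> sqrt (?x * ?t * ?y)"
      using assms by (intro convex_comb_sqrt_mult3_le) auto
    then show ?thesis by (simp add: ac_simps)
  next
    assume "(t1 - t2) * (x1 - x2) \<le> 0"
    then have "u * sqrt (y1 * t1 * x1) + (1 - u) * sqrt (y2 * t2 * x2) \<le> sqrt (?y * ?t * ?x)"
      using assms by (intro convex_comb_sqrt_mult3_le) auto
    then show ?thesis by (simp add: ac_simps)
  qed
  moreover have "0 \<le> ?t" "0 \<le> ?x" "0 \<le> ?y"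
    using assms by simp_all
  ultimately have "u * ?f1 + (1 - u) * ?f2 \<le> f_j (sqrt ?t) ?x ?y"
    using assms by (simp add: f_j_sqrt_eq algebra_simps)
  then show ?thesis
    using min_le_convex_comb[OF u, of ?f1 ?f2] by linarith
next
  case False
  \<comment> \<open>all three coordinates are ordered alike, so the pointwise minimum is one of the two points\<close>
  then have "f_j (sqrt (min t1 t2)) (min x1 x2) (min y1 y2) \<in> {?f1, ?f2}"
    by (auto simp: not_le zero_less_mult_iff min_def)
  moreover have "f_j (sqrt (min t1 t2)) (min x1 x2) (min y1 y2) \<le> f_j (sqrt ?t) ?x ?y"
    using nonneg min_le_convex_comb[OF u] by (intro f_j_sqrt_mono) auto
  ultimately show ?thesis by auto
qed

lemma min_mult_le_mult_convex_comb:
  fixes a1 a2 b1 b2 u :: real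
  assumes nonneg: "0 \<le> a1" "0 \<le> a2" "0 \<le> b1" "0 \<le> b2" and u: "0 \<le> u" "u \<le> 1"
  shows "min (a1 * b1) (a2 * b2) \<le> (u * a1 + (1 - u) * a2) * (u * b1 + (1 - u) * b2)"
proof (cases "(a1 - a2) * (b1 - b2) \<le> 0")
  case True
  then show ?thesis
    using convex_comb_mult_le_mult_convex_comb[OF True u] min_le_convex_comb[OF u, of "a1 * b1" "a2 * b2"]
    by linarith
next
  case False
  then have "min a1 a2 * min b1 b2 \<in> {a1 * b1, a2 * b2}"
    by (auto simp: not_le zero_less_mult_iff min_def)
  moreover have "min a1 a2 * min b1 b2 \<le> (u * a1 + (1 - u) * a2) * (u * b1 + (1 - u) * b2)"
    using nonneg u min_le_convex_comb[OF u] by (intro mult_mono) auto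
  ultimately show ?thesis by auto
qed

lemma quasi_concave_on_f_j_sqrt:
  "quasi_concave_on {(t, x, y). 0 \<le> t \<and> 0 \<le> x \<and> 0 \<le> y} (\<lambda>(t, x, y). f_j (sqrt t) x y)"
  unfolding quasi_concave_on_def by (auto intro!: min_f_j_sqrt_le_convex_comb)

lemma quasi_concave_on_g_star_sqrt:
  "quasi_concave_on {(t, z). 0 \<le> t \<and> t \<le> 1 \<and> 0 \<le> z} (\<lambda>(t, z). g_star (sqrt t) z)"
  unfolding quasi_concave_on_def
proof (clarsimp simp: g_star_def)
  fix t1 z1 t2 z2 u :: real
  assume "0 \<le> t1" "t1 \<le> 1" "0 \<le> z1" "0 \<le> t2" "t2 \<le> 1" "0 \<le> z2" "0 \<le> u" "u \<le> 1"
  then have "min ((1 - t1) * z1) ((1 - t2) * z2)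
      \<le> (u * (1 - t1) + (1 - u) * (1 - t2)) * (u * z1 + (1 - u) * z2)"
    by (intro min_mult_le_mult_convex_comb) auto
  moreover have "u * (1 - t1) + (1 - u) * (1 - t2) = 1 - (u * t1 + (1 - u) * t2)"
    by (simp add: algebra_simps)
  ultimately show "min ((1 - t1) * z1) ((1 - t2) * z2)
      \<le> (1 - (u * t1 + (1 - u) * t2)) * (u * z1 + (1 - u) * z2)"
    by simp
qed

theorem corollary2:
  fixes N :: nat and a_sr :: real and a_sd a_rd :: "nat \<Rightarrow> real"
  assumes "N \<ge> 1"
  shows "quasi_concave_on {(t, Ps, Pr). 0 \<le> t \<and> t \<le> 1 \<and> 0 \<le> Ps \<and> 0 \<le> Pr}
           (R_DF_P N a_sr a_sd a_rd)"
proof -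
  let ?S = "{(t, Ps, Pr). 0 \<le> t \<and> t \<le> 1 \<and> 0 \<le> Ps \<and> 0 \<le> Pr} :: (real \<times> real \<times> real) set"
  define F :: "real \<times> real \<times> real \<Rightarrow> real" where "F = (\<lambda>(t, x, y). f_j (sqrt t) x y)"
  define G :: "real \<times> real \<Rightarrow> real" where "G = (\<lambda>(t, z). g_star (sqrt t) z)"
  define Lf :: "nat \<Rightarrow> real \<times> real \<times> real \<Rightarrow> real \<times> real \<times> real"
    where "Lf j = (\<lambda>(t, Ps, Pr). (t, (a_sd j)\<^sup>2 * Ps, (a_rd j)\<^sup>2 * Pr))" for j
  define Lg :: "real \<times> real \<times> real \<Rightarrow> real \<times> real"
    where "Lg = (\<lambda>(t, Ps, Pr). (t, a_sr\<^sup>2 * Ps))"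
  have "?S = {0..1} \<times> {0..} \<times> {0..}"
    by auto
  then have "convex ?S"
    by (simp add: convex_Times)
  have "quasi_concave_on ?S (\<lambda>p. Ccap (F (Lf j p)))" for j
    unfolding F_def
    by (rule quasi_concave_on_mono_comp[OF quasi_concave_on_linear_comp[OF quasi_concave_on_f_j_sqrt]
          \<open>convex ?S\<close> _ mono_on_Ccap])
      (auto simp: Lf_def f_j_sqrt_eq distrib_left intro!: linearI)
  moreover have "quasi_concave_on ?S (\<lambda>p. Ccap (G (Lg p)))"
    unfolding G_def
    by (rule quasi_concave_on_mono_comp[OF quasi_concave_on_linear_comp[OF quasi_concave_on_g_star_sqrt]
          \<open>convex ?S\<close> _ mono_on_Ccap])
      (auto simp: Lg_def g_star_def distrib_left intro!: linearI)
  ultimately have "quasi_concave_on ?S (\<lambda>p. Min ((\<lambda>j. min (Ccap (F (Lf j p))) (Ccap (G (Lg p)))) ` {1..N}))"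
    using assms by (intro quasi_concave_on_Min quasi_concave_on_min) auto
  moreover have "R_DF_P N a_sr a_sd a_rd = (\<lambda>p. Min ((\<lambda>j. min (Ccap (F (Lf j p))) (Ccap (G (Lg p)))) ` {1..N}))"
    by (auto simp: fun_eq_iff R_DF_P_def R_DF_def F_def G_def Lf_def Lg_def)
  ultimately show ?thesis
    by simp
qed

end
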